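(* A function $f\colon\prod_{i\in[n]}X_i\to Y$ is a pseudo-polynomial function if and only if it satisfies condition (BC) and $\Phi_k^-\le\Phi_k^+$ (pointwise) for all $k\in[n]$.
   Context: $Y$ is a finite distributive lattice identified with a sublattice of $\mathcal{P}(U)$ for a finite set $U$, with least element $0=\emptyset$, greatest element $1=U$, and $\wedge,\vee$ being intersection and union; $\overline{S}=U\setminus S$. For $S\subseteq U$, $\operatorname{cl}(S)=\bigwedge\{y\in Y: y\ge S\}$, $\operatorname{int}(S)=\bigvee\{y\in Y: y\le S\}$. $[n]=\{1,\ldots,n\}$; $X_1,\ldots,X_n$ are arbitrary sets with at least two elements, each with two fixed distinct elements $0_{X_k},1_{X_k}$ (written $0,1$). For $\mathbf{x}\in\prod_i X_i$ and $a\in X_k$, $\mathbf{x}_k^a$ is $\mathbf{x}$ with $k$-th component replaced by $a$. A map $\varphi_k\colon X_k\to Y$ satisfies the boundary condition if $\varphi_k(0_{X_k})\le\varphi_k(x_k)\le\varphi_k(1_{X_k})$ for all $x_k$. A polynomial function $Y^n\to Y$ is a composition of $\wedge,\vee$ with variables and constants. $f$ is a pseudo-polynomial function if $f(\mathbf{x})=p(\varphi_1(x_1),\ldots,\varphi_n(x_n))$ for some polynomial function $p$ and maps $\varphi_k$ satisfying the boundary condition. Condition (BC): $f(\mathbf{x}_k^0)\le f(\mathbf{x})\le f(\mathbf{x}_k^1)$ for all $k\in[n]$ and all $\mathbf{x}$. For $k\in[n]$, $a_k\in X_k$: $$\Phi_k^-(a_k)=\bigvee_{\mathbf{x}:\,x_k=a_k}\operatorname{cl}\big(f(\mathbf{x})\wedge\overline{f(\mathbf{x}_k^0)}\big),\qquad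 \Phi_k^+(a_k)=\bigwedge_{\mathbf{x}:\,x_k=a_k}\operatorname{int}\big(f(\mathbf{x})\vee\overline{f(\mathbf{x}_k^1)}\big),$$ ranging over all $\mathbf{x}$ with $k$-th component $a_k$. *)

theory Defs
  imports Main "HOL-Library.FuncSet"
begin

text \<open>Y is a finite distributive lattice represented as a sublattice of Pow U
  containing the empty set and U.\<close>
definition set_lattice :: "'u set \<Rightarrow> 'u set set \<Rightarrow> bool" where
  "set_lattice U Y \<longleftrightarrow> finite U \<and> Y \<subseteq> Pow U \<and> {} \<in> Y \<and> U \<in> Y
     \<and> (\<forall>a\<in>Y. \<forall>b\<in>Y. a \<inter> b \<in> Y \<and> a \<union> b \<in> Y)"

definition lcl :: "'u set set \<Rightarrow> 'u set \<Rightarrow> 'u set" where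
  "lcl Y S = \<Inter> {y \<in> Y. S \<subseteq> y}"

definition lint :: "'u set set \<Rightarrow> 'u set \<Rightarrow> 'u set" where
  "lint Y S = \<Union> {y \<in> Y. y \<subseteq> S}"

datatype 'u lterm = LVar nat | LConst "'u set" | LMeet "'u lterm" "'u lterm" | LJoin "'u lterm" "'u lterm"

fun leval :: "'u lterm \<Rightarrow> (nat \<Rightarrow> 'u set) \<Rightarrow> 'u set" where
  "leval (LVar i) v = v i"
| "leval (LConst c) v = c"
| "leval (LMeet s t) v = leval s v \<inter> leval t v"
| "leval (LJoin s t) v = leval s v \<union> leval t v"

fun lterm_ok :: "nat \<Rightarrow> 'u set set \<Rightarrow> 'u lterm \<Rightarrow> bool" where
  "lterm_ok n Y (LVar i) \<longleftrightarrow> i \<in> {1..n}"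
| "lterm_ok n Y (LConst c) \<longleftrightarrow> c \<in> Y"
| "lterm_ok n Y (LMeet s t) \<longleftrightarrow> lterm_ok n Y s \<and> lterm_ok n Y t"
| "lterm_ok n Y (LJoin s t) \<longleftrightarrow> lterm_ok n Y s \<and> lterm_ok n Y t"

definition boundary_cond :: "'u set set \<Rightarrow> 'a set \<Rightarrow> 'a \<Rightarrow> 'a \<Rightarrow> ('a \<Rightarrow> 'u set) \<Rightarrow> bool" where
  "boundary_cond Y Xk z w \<phi> \<longleftrightarrow> (\<forall>x\<in>Xk. \<phi> x \<in> Y) \<and> (\<forall>x\<in>Xk. \<phi> z \<subseteq> \<phi> x \<and> \<phi> x \<subseteq> \<phi> w)"

definition pseudo_polynomial ::
  "nat \<Rightarrow> (nat \<Rightarrow> 'a set) \<Rightarrow> (nat \<Rightarrow> 'a) \<Rightarrow> (nat \<Rightarrow> 'a) \<Rightarrow> 'u set set \<Rightarrow> ((nat \<Rightarrow> 'a) \<Rightarrow> 'u set) \<Rightarrow> bool" where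
  "pseudo_polynomial n X zero one Y f \<longleftrightarrow>
     (\<exists>p \<phi>. lterm_ok n Y p \<and> (\<forall>k\<in>{1..n}. boundary_cond Y (X k) (zero k) (one k) (\<phi> k))
        \<and> (\<forall>x\<in>Pi\<^sub>E {1..n} X. f x = leval p (\<lambda>k. \<phi> k (x k))))"

definition BC ::
  "nat \<Rightarrow> (nat \<Rightarrow> 'a set) \<Rightarrow> (nat \<Rightarrow> 'a) \<Rightarrow> (nat \<Rightarrow> 'a) \<Rightarrow> ((nat \<Rightarrow> 'a) \<Rightarrow> 'u set) \<Rightarrow> bool" where
  "BC n X zero one f \<longleftrightarrow> (\<forall>k\<in>{1..n}. \<forall>x\<in>Pi\<^sub>E {1..n} X.
      f (x(k := zero k)) \<subseteq> f x \<and> f x \<subseteq> f (x(k := one k)))"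

definition Phi_minus ::
  "nat \<Rightarrow> (nat \<Rightarrow> 'a set) \<Rightarrow> (nat \<Rightarrow> 'a) \<Rightarrow> 'u set \<Rightarrow> 'u set set \<Rightarrow> ((nat \<Rightarrow> 'a) \<Rightarrow> 'u set) \<Rightarrow> nat \<Rightarrow> 'a \<Rightarrow> 'u set" where
  "Phi_minus n X zero U Y f k a =
     \<Union> {lcl Y (f x \<inter> (U - f (x(k := zero k)))) | x. x \<in> Pi\<^sub>E {1..n} X \<and> x k = a}"

definition Phi_plus ::
  "nat \<Rightarrow> (nat \<Rightarrow> 'a set) \<Rightarrow> (nat \<Rightarrow> 'a) \<Rightarrow> 'u set \<Rightarrow> 'u set set \<Rightarrow> ((nat \<Rightarrow> 'a) \<Rightarrow> 'u set) \<Rightarrow> nat \<Rightarrow> 'a \<Rightarrow> 'u set" where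
  "Phi_plus n X one U Y f k a =
     U \<inter> \<Inter> {lint Y (f x \<union> (U - f (x(k := one k)))) | x. x \<in> Pi\<^sub>E {1..n} X \<and> x k = a}"

end

theory Submission
  imports Defs
begin

(*
  If f(x) = p(\<phi>_1(x_1),...,\<phi>_n(x_n)), then monotonicity of lattice
  polynomials together with the boundary condition on \<phi>_k gives (BC).  Moreover,
  changing the k-th argument of p from \<phi>_k(0) to t changes the value by at most t:
    f(x) \<inter> \<not>f(x_k^0) \<subseteq> \<phi>_k(x_k)   and   \<phi>_k(x_k) \<inter> f(x_k^1) \<subseteq> f(x),
  so \<phi>_k(a) lies between \<Phi>_k^-(a) and \<Phi>_k^+(a) (closure and interior in Y).

  With \<phi>_k := \<Phi>_k^-, (BC) and \<Phi>_k^- \<subseteq> \<Phi>_k^+ yield the median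
  decomposition  f(x) = f(x_k^0) \<union> (f(x_k^1) \<inter> \<phi>_k(x_k))  in every coordinate;
  \<Phi>_k^- itself satisfies the boundary condition.  Unfolding the decomposition
  coordinate by coordinate (a Shannon-type expansion) produces a polynomial term
  representing f, which proves that f is pseudo-polynomial.
*)

lemma PiE_upd:
  assumes "k \<in> S" "c \<in> T k" "x \<in> Pi\<^sub>E S T"
  shows "x(k := c) \<in> Pi\<^sub>E S T"
  using PiE_fun_upd[of c T k x S] assms by (simp add: insert_absorb)

section \<open>Finite set lattices, closure and interior\<close>

lemma set_lattice_finite: "set_lattice U Y \<Longrightarrow> finite Y"
  unfolding set_lattice_def by (meson finite_Pow_iff finite_subset)

lemma set_lattice_subset_top: "set_lattice U Y \<Longrightarrow> y \<in> Y \<Longrightarrow> y \<subseteq> U"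
  unfolding set_lattice_def by auto

lemma set_lattice_Union:
  assumes Y: "set_lattice U Y" and A: "A \<subseteq> Y"
  shows "\<Union>A \<in> Y"
proof -
  have "finite A" using set_lattice_finite[OF Y] A finite_subset by blast
  then show ?thesis using A
  proof (induction A rule: finite_induct)
    case empty then show ?case using Y by (simp add: set_lattice_def)
  next
    case (insert a A) then show ?case using Y unfolding set_lattice_def by auto
  qed
qed

lemma set_lattice_Inter:
  assumes Y: "set_lattice U Y" and A: "A \<subseteq> Y"
  shows "U \<inter> \<Inter>A \<in> Y"
proof -
  have "finite A" using set_lattice_finite[OF Y] A finite_subset by blast
  then show ?thesis using A
  proof (induction A rule: finite_induct)
    case empty then show ?case using Y by (simp add: set_lattice_def)
  next
    case (insert a A)
    have "U \<inter> \<Inter>(insert a A) = a \<inter> (U \<inter> \<Inter>A)" by auto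
    then show ?case using insert Y unfolding set_lattice_def by auto
  qed
qed

lemma lcl_in_lattice:
  assumes Y: "set_lattice U Y" and S: "S \<subseteq> U"
  shows "lcl Y S \<in> Y"
proof -
  have "U \<in> {y \<in> Y. S \<subseteq> y}" using Y S by (simp add: set_lattice_def)
  then have "lcl Y S = U \<inter> \<Inter>{y \<in> Y. S \<subseteq> y}" unfolding lcl_def by auto
  then show ?thesis using set_lattice_Inter[OF Y, of "{y \<in> Y. S \<subseteq> y}"] by auto
qed

lemma lcl_upper: "S \<subseteq> lcl Y S"
  unfolding lcl_def by auto

lemma lcl_least: "y \<in> Y \<Longrightarrow> S \<subseteq> y \<Longrightarrow> lcl Y S \<subseteq> y"
  unfolding lcl_def by auto

lemma lcl_mono: "S \<subseteq> T \<Longrightarrow> lcl Y S \<subseteq> lcl Y T"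
  unfolding lcl_def by auto

lemma lint_lower: "lint Y S \<subseteq> S"
  unfolding lint_def by auto

lemma lint_greatest: "y \<in> Y \<Longrightarrow> y \<subseteq> S \<Longrightarrow> y \<subseteq> lint Y S"
  unfolding lint_def by auto

section \<open>Lattice polynomials\<close>

lemma leval_mono: "(\<And>i. v i \<subseteq> w i) \<Longrightarrow> leval p v \<subseteq> leval p w"
  by (induction p) auto

text \<open>These are
  the two inequalities behind Phi_minus below phi k below Phi_plus.\<close>

lemma leval_upd_upper: "leval p (v(k := t)) \<subseteq> leval p (v(k := c)) \<union> t"
  by (induction p) auto

lemma leval_upd_lower: "t \<inter> leval p (v(k := d)) \<subseteq> leval p (v(k := t))"
  by (induction p) auto

section \<open>Necessity\<close>

lemma represented_upd:
  assumes rep: "\<forall>x\<in>Pi\<^sub>E {1..n} X. f x = leval p (\<lambda>i. \<phi> i (x i))"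
    and k: "k \<in> {1..n}" and x: "x \<in> Pi\<^sub>E {1..n} X" and c: "c \<in> X k"
  shows "f (x(k := c)) = leval p ((\<lambda>i. \<phi> i (x i))(k := \<phi> k c))"
proof -
  have "(\<lambda>i. \<phi> i ((x(k := c)) i)) = (\<lambda>i. \<phi> i (x i))(k := \<phi> k c)" by (rule ext) simp
  then show ?thesis using rep PiE_upd[OF k c x] by metis
qed

text \<open>The trivial update, written in the same shape so that both sides of the
  inequalities below are evaluations of p at updated argument vectors.\<close>

lemma represented_self:
  assumes rep: "\<forall>x\<in>Pi\<^sub>E {1..n} X. f x = leval p (\<lambda>i. \<phi> i (x i))"
    and x: "x \<in> Pi\<^sub>E {1..n} X"
  shows "f x = leval p ((\<lambda>i. \<phi> i (x i))(k := \<phi> k (x k)))"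
  using rep x by (simp add: fun_upd_idem)

lemma represented_BC:
  assumes rep: "\<forall>x\<in>Pi\<^sub>E {1..n} X. f x = leval p (\<lambda>i. \<phi> i (x i))"
    and bc: "\<forall>k\<in>{1..n}. boundary_cond Y (X k) (zero k) (one k) (\<phi> k)"
    and ends: "\<forall>k\<in>{1..n}. zero k \<in> X k \<and> one k \<in> X k"
  shows "BC n X zero one f"
  unfolding BC_def
proof (intro ballI conjI)
  fix k x assume k: "k \<in> {1..n}" and x: "x \<in> Pi\<^sub>E {1..n} X"
  have zero: "zero k \<in> X k" and one: "one k \<in> X k" using ends k by auto
  have "x k \<in> X k" using k x by auto
  then have low: "\<phi> k (zero k) \<subseteq> \<phi> k (x k)" and high: "\<phi> k (x k) \<subseteq> \<phi> k (one k)"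
    using bc k unfolding boundary_cond_def by auto
  have "leval p ((\<lambda>i. \<phi> i (x i))(k := \<phi> k (zero k))) \<subseteq> leval p ((\<lambda>i. \<phi> i (x i))(k := \<phi> k (x k)))"
    by (rule leval_mono) (use low in auto)
  then show "f (x(k := zero k)) \<subseteq> f x"
    unfolding represented_upd[OF rep k x zero] represented_self[OF rep x, of k] .
  have "leval p ((\<lambda>i. \<phi> i (x i))(k := \<phi> k (x k))) \<subseteq> leval p ((\<lambda>i. \<phi> i (x i))(k := \<phi> k (one k)))"
    by (rule leval_mono) (use high in auto)
  then show "f x \<subseteq> f (x(k := one k))"
    unfolding represented_upd[OF rep k x one] represented_self[OF rep x, of k] .
qed

lemma represented_Phi_bounds:
  assumes Y: "set_lattice U Y"
    and rep: "\<forall>x\<in>Pi\<^sub>E {1..n} X. f x = leval p (\<lambda>i. \<phi> i (x i))"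
    and k: "k \<in> {1..n}" and ends: "zero k \<in> X k" "one k \<in> X k"
    and a: "a \<in> X k" and \<phi>a: "\<phi> k a \<in> Y"
  shows "Phi_minus n X zero U Y f k a \<subseteq> \<phi> k a" and "\<phi> k a \<subseteq> Phi_plus n X one U Y f k a"
proof -
  have "lcl Y (f x \<inter> (U - f (x(k := zero k)))) \<subseteq> \<phi> k a"
    if x: "x \<in> Pi\<^sub>E {1..n} X" and xa: "x k = a" for x
  proof -
    have "f x \<subseteq> f (x(k := zero k)) \<union> \<phi> k a"
      unfolding represented_upd[OF rep k x ends(1)] represented_self[OF rep x, of k]
      using xa leval_upd_upper by metis
    then show ?thesis using \<phi>a by (intro lcl_least) auto
  qed
  then show "Phi_minus n X zero U Y f k a \<subseteq> \<phi> k a"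
    unfolding Phi_minus_def by blast
  have "\<phi> k a \<subseteq> lint Y (f x \<union> (U - f (x(k := one k))))"
    if x: "x \<in> Pi\<^sub>E {1..n} X" and xa: "x k = a" for x
  proof -
    have "\<phi> k a \<inter> f (x(k := one k)) \<subseteq> f x"
      unfolding represented_upd[OF rep k x ends(2)] represented_self[OF rep x, of k]
      using xa leval_upd_lower by metis
    then show ?thesis
      using set_lattice_subset_top[OF Y \<phi>a] by (intro lint_greatest[OF \<phi>a]) blast
  qed
  then show "\<phi> k a \<subseteq> Phi_plus n X one U Y f k a"
    unfolding Phi_plus_def using set_lattice_subset_top[OF Y \<phi>a] by blast
qed

section \<open>Sufficiency\<close>

definition median_decomposition ::
  "nat \<Rightarrow> (nat \<Rightarrow> 'a set) \<Rightarrow> (nat \<Rightarrow> 'a) \<Rightarrow> (nat \<Rightarrow> 'a) \<Rightarrow> ((nat \<Rightarrow> 'a) \<Rightarrow> 'u set)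
     \<Rightarrow> (nat \<Rightarrow> 'a \<Rightarrow> 'u set) \<Rightarrow> bool" where
  "median_decomposition n X zero one f \<phi> \<longleftrightarrow>
     (\<forall>k\<in>{1..n}. \<forall>x\<in>Pi\<^sub>E {1..n} X.
        f x = f (x(k := zero k)) \<union> (f (x(k := one k)) \<inter> \<phi> k (x k)))"

text \<open>Under (BC) and Phi_minus below Phi_plus, f has a median decomposition with
  respect to Phi_minus: the closure and interior bounds pin f x down exactly.\<close>

lemma Phi_minus_median_decomposition:
  assumes Y: "set_lattice U Y" and fY: "\<forall>x\<in>Pi\<^sub>E {1..n} X. f x \<in> Y"
    and bc: "BC n X zero one f"
    and Phi: "\<forall>k\<in>{1..n}. \<forall>a\<in>X k. Phi_minus n X zero U Y f k a \<subseteq> Phi_plus n X one U Y f k a"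
  shows "median_decomposition n X zero one f (Phi_minus n X zero U Y f)"
  unfolding median_decomposition_def
proof (intro ballI equalityI)
  fix k x assume k: "k \<in> {1..n}" and x: "x \<in> Pi\<^sub>E {1..n} X"
  let ?f0 = "f (x(k := zero k))" and ?f1 = "f (x(k := one k))"
    and ?\<phi> = "Phi_minus n X zero U Y f k (x k)"
  have mono: "?f0 \<subseteq> f x" "f x \<subseteq> ?f1" using bc k x unfolding BC_def by auto
  have fxU: "f x \<subseteq> U" using set_lattice_subset_top[OF Y] fY x by blast
  have "f x \<inter> (U - ?f0) \<subseteq> lcl Y (f x \<inter> (U - ?f0))" by (rule lcl_upper)
  also have "\<dots> \<subseteq> ?\<phi>" unfolding Phi_minus_def using x by blast
  finally show "f x \<subseteq> ?f0 \<union> (?f1 \<inter> ?\<phi>)"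
    using mono fxU by blast
  have "?\<phi> \<subseteq> Phi_plus n X one U Y f k (x k)" using Phi k x by blast
  also have "\<dots> \<subseteq> lint Y (f x \<union> (U - ?f1))" unfolding Phi_plus_def using x by blast
  also have "\<dots> \<subseteq> f x \<union> (U - ?f1)" by (rule lint_lower)
  finally show "?f0 \<union> (?f1 \<inter> ?\<phi>) \<subseteq> f x" using mono by blast
qed

lemma Phi_minus_boundary_cond:
  assumes Y: "set_lattice U Y" and fY: "\<forall>x\<in>Pi\<^sub>E {1..n} X. f x \<in> Y"
    and bc: "BC n X zero one f" and k: "k \<in> {1..n}" and one: "one k \<in> X k"
  shows "boundary_cond Y (X k) (zero k) (one k) (Phi_minus n X zero U Y f k)"
  unfolding boundary_cond_def
proof (intro conjI ballI)
  fix a assume "a \<in> X k"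
  have "lcl Y (f x \<inter> (U - f (x(k := zero k)))) \<in> Y" if "x \<in> Pi\<^sub>E {1..n} X" for x
    using lcl_in_lattice[OF Y] set_lattice_subset_top[OF Y] fY that by (meson Int_lower1 subset_trans)
  then show "Phi_minus n X zero U Y f k a \<in> Y" unfolding Phi_minus_def
    by (intro set_lattice_Union[OF Y]) blast
  have "lcl Y (f x \<inter> (U - f (x(k := zero k)))) = {}" if "x k = zero k" for x
  proof -
    have "x(k := zero k) = x" using that by auto
    then show ?thesis using Y by (intro subset_antisym lcl_least) (auto simp: set_lattice_def)
  qed
  then have "Phi_minus n X zero U Y f k (zero k) = {}" unfolding Phi_minus_def by auto
  then show "Phi_minus n X zero U Y f k (zero k) \<subseteq> Phi_minus n X zero U Y f k a" by simp
  have "lcl Y (f x \<inter> (U - f (x(k := zero k)))) \<subseteq> Phi_minus n X zero U Y f k (one k)"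
    if x: "x \<in> Pi\<^sub>E {1..n} X" for x
  proof -
    let ?x = "x(k := one k)"
    have "f x \<subseteq> f ?x" using bc k x unfolding BC_def by blast
    then have "lcl Y (f x \<inter> (U - f (x(k := zero k)))) \<subseteq> lcl Y (f ?x \<inter> (U - f (?x(k := zero k))))"
      by (intro lcl_mono) auto
    moreover have "?x \<in> Pi\<^sub>E {1..n} X" using PiE_upd[OF k one x] .
    moreover have "?x k = one k" by simp
    ultimately show ?thesis unfolding Phi_minus_def by blast
  qed
  then show "Phi_minus n X zero U Y f k a \<subseteq> Phi_minus n X zero U Y f k (one k)"
    unfolding Phi_minus_def by blast
qed

fun shannon_term ::
  "((nat \<Rightarrow> 'a) \<Rightarrow> 'u set) \<Rightarrow> (nat \<Rightarrow> 'a) \<Rightarrow> (nat \<Rightarrow> 'a) \<Rightarrow> nat \<Rightarrow> (nat \<Rightarrow> 'a) \<Rightarrow> 'u lterm" where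
  "shannon_term f zero one 0 e = LConst (f e)"
| "shannon_term f zero one (Suc m) e =
     LJoin (shannon_term f zero one m (e(Suc m := zero (Suc m))))
           (LMeet (shannon_term f zero one m (e(Suc m := one (Suc m)))) (LVar (Suc m)))"

lemma shannon_term_cong:
  "(\<And>i. i \<notin> {1..m} \<Longrightarrow> e i = e' i) \<Longrightarrow> shannon_term f zero one m e = shannon_term f zero one m e'"
proof (induction m arbitrary: e e')
  case 0 then have "e = e'" by auto
  then show ?case by simp
next
  case (Suc m)
  have "shannon_term f zero one m (e(Suc m := c)) = shannon_term f zero one m (e'(Suc m := c))" for c
    using Suc.prems by (intro Suc.IH) auto
  then show ?case by simp
qed

lemma shannon_term_ok:
  assumes ends: "\<forall>k\<in>{1..n}. zero k \<in> X k \<and> one k \<in> X k"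
    and fY: "\<forall>x\<in>Pi\<^sub>E {1..n} X. f x \<in> Y"
  shows "m \<le> n \<Longrightarrow> e \<in> Pi\<^sub>E {1..n} X \<Longrightarrow> lterm_ok n Y (shannon_term f zero one m e)"
proof (induction m arbitrary: e)
  case 0 then show ?case using fY by simp
next
  case (Suc m)
  have k: "Suc m \<in> {1..n}" using Suc.prems by auto
  have "e(Suc m := zero (Suc m)) \<in> Pi\<^sub>E {1..n} X" "e(Suc m := one (Suc m)) \<in> Pi\<^sub>E {1..n} X"
    using PiE_upd[OF k] ends k Suc.prems by auto
  then show ?case using Suc k by simp
qed

lemma shannon_term_eval:
  assumes ends: "\<forall>k\<in>{1..n}. zero k \<in> X k \<and> one k \<in> X k"
    and med: "median_decomposition n X zero one f \<phi>"
  shows "m \<le> n \<Longrightarrow> e \<in> Pi\<^sub>E {1..n} X \<Longrightarrow> (\<And>i. i \<in> {1..m} \<Longrightarrow> v i = \<phi> i (e i))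
     \<Longrightarrow> leval (shannon_term f zero one m e) v = f e"
proof (induction m arbitrary: e)
  case 0 then show ?case by simp
next
  case (Suc m)
  let ?e0 = "e(Suc m := zero (Suc m))" and ?e1 = "e(Suc m := one (Suc m))"
  have k: "Suc m \<in> {1..n}" using Suc.prems by auto
  have "?e0 \<in> Pi\<^sub>E {1..n} X" "?e1 \<in> Pi\<^sub>E {1..n} X"
    using PiE_upd[OF k] ends k Suc.prems by auto
  then have IH0: "leval (shannon_term f zero one m ?e0) v = f ?e0"
    and IH1: "leval (shannon_term f zero one m ?e1) v = f ?e1"
    using Suc by (auto intro!: Suc.IH)
  have vm: "v (Suc m) = \<phi> (Suc m) (e (Suc m))" using Suc.prems by auto
  have "leval (shannon_term f zero one (Suc m) e) v = f ?e0 \<union> (f ?e1 \<inter> \<phi> (Suc m) (e (Suc m)))"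
    by (simp only: shannon_term.simps leval.simps IH0 IH1 vm)
  also have "\<dots> = f e"
    using med k Suc.prems(2) unfolding median_decomposition_def by blast
  finally show ?case .
qed

lemma median_decomposition_polynomial:
  assumes ends: "\<forall>k\<in>{1..n}. zero k \<in> X k \<and> one k \<in> X k"
    and fY: "\<forall>x\<in>Pi\<^sub>E {1..n} X. f x \<in> Y"
    and med: "median_decomposition n X zero one f \<phi>"
  obtains p where "lterm_ok n Y p" and "\<forall>x\<in>Pi\<^sub>E {1..n} X. f x = leval p (\<lambda>i. \<phi> i (x i))"
proof
  define x0 where "x0 = restrict zero {1..n}"
  have x0: "x0 \<in> Pi\<^sub>E {1..n} X" unfolding x0_def using ends by auto
  show "lterm_ok n Y (shannon_term f zero one n x0)"
    using shannon_term_ok[OF ends fY] x0 by blast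
  show "\<forall>x\<in>Pi\<^sub>E {1..n} X. f x = leval (shannon_term f zero one n x0) (\<lambda>i. \<phi> i (x i))"
  proof
    fix x assume x: "x \<in> Pi\<^sub>E {1..n} X"
    have "shannon_term f zero one n x0 = shannon_term f zero one n x"
      using x x0 by (intro shannon_term_cong) (auto simp: PiE_def extensional_def)
    then show "f x = leval (shannon_term f zero one n x0) (\<lambda>i. \<phi> i (x i))"
      using shannon_term_eval[OF ends med, where m=n and e=x] x by simp
  qed
qed

theorem mainTheorem6:
  fixes n :: nat and X :: "nat \<Rightarrow> 'a set" and zero one :: "nat \<Rightarrow> 'a"
    and U :: "'u set" and Y :: "'u set set" and f :: "(nat \<Rightarrow> 'a) \<Rightarrow> 'u set"
  assumes "set_lattice U Y"
    and "\<forall>k\<in>{1..n}. zero k \<in> X k \<and> one k \<in> X k \<and> zero k \<noteq> one k"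
    and "\<forall>x\<in>Pi\<^sub>E {1..n} X. f x \<in> Y"
  shows "pseudo_polynomial n X zero one Y f \<longleftrightarrow>
    (BC n X zero one f \<and>
     (\<forall>k\<in>{1..n}. \<forall>a\<in>X k. Phi_minus n X zero U Y f k a \<subseteq> Phi_plus n X one U Y f k a))"
proof -
  have ends: "\<forall>k\<in>{1..n}. zero k \<in> X k \<and> one k \<in> X k" using assms(2) by blast
  show ?thesis
  proof
    assume "pseudo_polynomial n X zero one Y f"
    then obtain p \<phi> where bc: "\<forall>k\<in>{1..n}. boundary_cond Y (X k) (zero k) (one k) (\<phi> k)"
      and rep: "\<forall>x\<in>Pi\<^sub>E {1..n} X. f x = leval p (\<lambda>i. \<phi> i (x i))"
      unfolding pseudo_polynomial_def by blast
    have "Phi_minus n X zero U Y f k a \<subseteq> Phi_plus n X one U Y f k a"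
      if k: "k \<in> {1..n}" and a: "a \<in> X k" for k a
    proof -
      have "\<phi> k a \<in> Y" using bc k a unfolding boundary_cond_def by blast
      then show ?thesis using represented_Phi_bounds[OF assms(1) rep k _ _ a] ends k by blast
    qed
    then show "BC n X zero one f \<and>
      (\<forall>k\<in>{1..n}. \<forall>a\<in>X k. Phi_minus n X zero U Y f k a \<subseteq> Phi_plus n X one U Y f k a)"
      using represented_BC[OF rep bc ends] by blast
  next
    assume "BC n X zero one f \<and>
      (\<forall>k\<in>{1..n}. \<forall>a\<in>X k. Phi_minus n X zero U Y f k a \<subseteq> Phi_plus n X one U Y f k a)"
    then have bc: "BC n X zero one f" and Phi: "\<forall>k\<in>{1..n}. \<forall>a\<in>X k.
        Phi_minus n X zero U Y f k a \<subseteq> Phi_plus n X one U Y f k a" by blast+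
    obtain p where "lterm_ok n Y p"
      and "\<forall>x\<in>Pi\<^sub>E {1..n} X. f x = leval p (\<lambda>i. Phi_minus n X zero U Y f i (x i))"
      using median_decomposition_polynomial[OF ends assms(3)
          Phi_minus_median_decomposition[OF assms(1,3) bc Phi]] .
    moreover have "\<forall>k\<in>{1..n}. boundary_cond Y (X k) (zero k) (one k) (Phi_minus n X zero U Y f k)"
      using Phi_minus_boundary_cond[OF assms(1,3) bc] ends by simp
    ultimately show "pseudo_polynomial n X zero one Y f"
      unfolding pseudo_polynomial_def by blast
  qed
qed

end
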